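(* Let $p=(p_1,\ldots,p_m)$ be p-values for hypotheses $H_1,\dots,H_m$ with set of true nulls $\mathcal{H}_0\subseteq\{1,\dots,m\}$. Assume $p$ is PRDS on $\mathcal{H}_0$ and that each null p-value $p_i$, $i\in\mathcal{H}_0$, is super-uniform (i.e. $\mathbb{P}[p_i\le t]\le t$ for all $t\in[0,1]$) and satisfies $p_i\ge p_{\min}$ almost surely for a constant $p_{\min}\in[0,1]$. Let $\alpha,\lambda\in(0,1)$ and let $\mathcal{R}$ be the rejection set of the Storey-BH procedure with parameters $\alpha,\lambda$ applied to $p$, and $A=\sum_{i=1}^m I(p_i\ge\lambda)$. Then \[\mathbb{E}\left[\frac{|\mathcal{R} \cap \mathcal{H}_0|}{\max\{1, |\mathcal{R}|\} } \right]\le \alpha(1 - \lambda)\sum_{i\in \mathcal{H}_0}\mathbb{E}\left[\frac{1}{1 + A}\mid p_i\le p_{*}\right],\qquad p_{*} = \max\left\{\frac{\alpha(1 - \lambda)}{m}, p_{\min}\right\}.\]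
   Context: Storey-BH procedure: given p-values $p_1,\dots,p_m$ with order statistics $p_{(1)}\le\dots\le p_{(m)}$, $\alpha\in(0,1)$ and $\lambda\in(0,1)$, let $A=\sum_{i=1}^m I(p_i\ge\lambda)$, $\hat\pi_0=\frac{1+A}{m(1-\lambda)}$, $R=\max\{r\in\{1,\dots,m\}: p_{(r)}\le \frac{\alpha r}{m\hat\pi_0},\ p_{(r)}<\lambda\}$ ($R=0$ if empty), and reject $\mathcal{R}=\{i: p_i\le \frac{\alpha R}{m\hat\pi_0},\ p_i<\lambda\}$. For vectors $a,b\in\mathbb{R}^m$, $a\succeq b$ means coordinatewise $a_j\ge b_j$; $A'\subset\mathbb{R}^m$ is increasing if $a\in A'$, $b\succeq a$ imply $b\in A'$. A random vector $Y$ is PRDS on $I_0$ if for every $i\in I_0$ and every increasing set $A'$, $y\mapsto\mathbb{P}[Y\in A'\mid Y_i=y]$ is non-decreasing. *)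

theory Defs
  imports "HOL-Probability.Probability" "HOL-Library.Multiset"
begin

text \<open>p-value vectors are functions from a finite index type 'm to the reals;
  the number of hypotheses is m = CARD('m).\<close>

definition order_stat :: "('m::finite \<Rightarrow> real) \<Rightarrow> nat \<Rightarrow> real" where
  "order_stat x r = sorted_list_of_multiset (image_mset x (mset_set UNIV)) ! (r - 1)"

definition storey_A :: "real \<Rightarrow> ('m::finite \<Rightarrow> real) \<Rightarrow> nat" where
  "storey_A lam x = card {i. x i \<ge> lam}"

definition storey_pi0 :: "real \<Rightarrow> ('m::finite \<Rightarrow> real) \<Rightarrow> real" where
  "storey_pi0 lam x = (1 + real (storey_A lam x)) / (real CARD('m) * (1 - lam))"

definition storey_R :: "real \<Rightarrow> real \<Rightarrow> ('m::finite \<Rightarrow> real) \<Rightarrow> nat" where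
  "storey_R alpha lam x =
     Max ({r \<in> {1..CARD('m)}.
            order_stat x r \<le> alpha * real r / (real CARD('m) * storey_pi0 lam x)
          \<and> order_stat x r < lam} \<union> {0})"

definition storey_rej :: "real \<Rightarrow> real \<Rightarrow> ('m::finite \<Rightarrow> real) \<Rightarrow> 'm set" where
  "storey_rej alpha lam x =
     {i. x i \<le> alpha * real (storey_R alpha lam x) / (real CARD('m) * storey_pi0 lam x)
        \<and> x i < lam}"

definition increasing_set :: "('m \<Rightarrow> real) set \<Rightarrow> bool" where
  "increasing_set S \<longleftrightarrow> (\<forall>a\<in>S. \<forall>b. (\<forall>j. a j \<le> b j) \<longrightarrow> b \<in> S)"

text \<open>PRDS on I0: for every i in I0 and every measurable increasing set S, the
  conditional probability P[Y \<in> S | Y_i = y] admits a version g (with values in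
  [0,1]) that is non-decreasing in y.  "g is a version" means
  P[Y \<in> S, Y_i \<in> B] = E[1{Y_i \<in> B} g(Y_i)] for all Borel B.\<close>
definition PRDS :: "'a measure \<Rightarrow> ('a \<Rightarrow> ('m::finite \<Rightarrow> real)) \<Rightarrow> 'm set \<Rightarrow> bool" where
  "PRDS M Y I0 \<longleftrightarrow>
    (\<forall>i\<in>I0. \<forall>S. S \<in> sets (Pi\<^sub>M UNIV (\<lambda>_. borel)) \<and> increasing_set S \<longrightarrow>
      (\<exists>g :: real \<Rightarrow> real. mono g \<and> g \<in> borel_measurable borel \<and> (\<forall>y. 0 \<le> g y \<and> g y \<le> 1) \<and>
         (\<forall>B \<in> sets borel.
            measure M {\<omega> \<in> space M. Y \<omega> \<in> S \<and> Y \<omega> i \<in> B}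
            = (\<integral>\<omega>. indicator {\<omega> \<in> space M. Y \<omega> i \<in> B} \<omega> * g (Y \<omega> i) \<partial>M))))"

definition cond_exp_event :: "'a measure \<Rightarrow> ('a \<Rightarrow> real) \<Rightarrow> 'a set \<Rightarrow> real" where
  "cond_exp_event M X E = (\<integral>\<omega>. indicator E \<omega> * X \<omega> \<partial>M) / measure M E"

end

theory Submission
  imports Defs
begin

text \<open>Write \<open>T = \<alpha>(1 - \<lambda>)R/(1 + A)\<close> for the rejection threshold, so that hypothesis \<open>i\<close> is rejected
  iff \<open>p\<^sub>i \<le> T\<close> and \<open>p\<^sub>i < \<lambda>\<close>, and \<open>W = 1/(1 + A)\<close>. Since at least \<open>R\<close> hypotheses are rejected,
  the false discovery proportion is at most \<open>\<alpha>(1 - \<lambda>)\<close> times the sum over true nulls \<open>i\<close>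
  of \<open>1{i rejected} W/T\<close>.
  When a null is rejected, \<open>T\<close> is one of finitely many values \<open>v \<ge> p\<^sub>*\<close>, so its term is at most
  \<open>\<Sum>\<^sub>v 1{p\<^sub>i \<le> v, T = v} W/v\<close>. Raising a p-value raises \<open>A\<close> and lowers \<open>T\<close>, so \<open>W 1{T \<ge> u}\<close>
  is a non-negative combination of indicators of decreasing sets, and by PRDS its conditional
  mean given \<open>p\<^sub>i \<le> t\<close> is non-increasing in \<open>t\<close>. With super-uniformity \<open>P(p\<^sub>i \<le> v) \<le> v\<close>
  the sum over \<open>v\<close>, taken in increasing order, telescopes to at most \<open>E[W | p\<^sub>i \<le> p\<^sub>*]\<close>.\<close>

section \<open>Order statistics\<close>

lemma sorted_nth_iff_less_length_filter:
  fixes xs :: "'a::linorder list"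
  assumes "sorted xs" "r < length xs" and down: "\<And>a b. P b \<Longrightarrow> a \<le> b \<Longrightarrow> P a"
  shows "P (xs ! r) \<longleftrightarrow> r < length (filter P xs)"
  using assms(1,2)
proof (induction xs arbitrary: r)
  case Nil
  then show ?case by simp
next
  case (Cons a xs)
  show ?case
  proof (cases "P a")
    case True
    then show ?thesis using Cons by (cases r) auto
  next
    case False
    then have "\<forall>y\<in>set xs. \<not> P y" using Cons.prems(1) down by auto
    then show ?thesis using False Cons.prems(2) by (cases r) (auto simp: filter_empty_conv)
  qed
qed

lemma order_stat_le_iff:
  fixes x :: "'m::finite \<Rightarrow> real"
  assumes "1 \<le> r" "r \<le> CARD('m)"
  shows "order_stat x r \<le> c \<longleftrightarrow> r \<le> card {i. x i \<le> c}"
proof -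
  define xs where "xs = sorted_list_of_multiset (image_mset x (mset_set (UNIV :: 'm set)))"
  have mset_xs: "mset xs = image_mset x (mset_set UNIV)"
    unfolding xs_def by simp
  have "length (filter (\<lambda>v. v \<le> c) xs) = size (filter_mset (\<lambda>v. v \<le> c) (mset xs))"
    by (metis mset_filter size_mset)
  also have "\<dots> = card {i. x i \<le> c}"
    by (simp add: mset_xs filter_mset_image_mset filter_mset_mset_set)
  finally have "length (filter (\<lambda>v. v \<le> c) xs) = card {i. x i \<le> c}" .
  moreover have "length xs = CARD('m)"
    using arg_cong[OF mset_xs, of size] by simp
  moreover have "order_stat x r = xs ! (r - 1)"
    unfolding order_stat_def xs_def ..
  ultimately show ?thesis
    using sorted_nth_iff_less_length_filter[of xs "r - 1" "\<lambda>v. v \<le> c"] assms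
    by (auto simp: xs_def)
qed

lemma order_stat_mono:
  fixes x y :: "'m::finite \<Rightarrow> real"
  assumes "x \<le> y" "1 \<le> r" "r \<le> CARD('m)"
  shows "order_stat x r \<le> order_stat y r"
proof -
  have "r \<le> card {j. y j \<le> order_stat y r}"
    using order_stat_le_iff assms(2,3) by blast
  also have "\<dots> \<le> card {j. x j \<le> order_stat y r}"
    using assms(1) by (intro card_mono) (auto simp: le_fun_def intro: order_trans)
  finally show ?thesis
    using order_stat_le_iff assms(2,3) by blast
qed

section \<open>The Storey-BH procedure\<close>

definition storey_R_set :: "real \<Rightarrow> real \<Rightarrow> ('m::finite \<Rightarrow> real) \<Rightarrow> nat set" where
  "storey_R_set alpha lam x = {r \<in> {1..CARD('m)}.
     order_stat x r \<le> alpha * real r / (real CARD('m) * storey_pi0 lam x) \<and> order_stat x r < lam}"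

definition storey_thr :: "real \<Rightarrow> real \<Rightarrow> ('m::finite \<Rightarrow> real) \<Rightarrow> real" where
  "storey_thr alpha lam x = alpha * real (storey_R alpha lam x) / (real CARD('m) * storey_pi0 lam x)"

lemma storey_R_eq_Max: "storey_R alpha lam x = Max (storey_R_set alpha lam x \<union> {0})"
  unfolding storey_R_def storey_R_set_def ..

lemma storey_rej_iff: "i \<in> storey_rej alpha lam x \<longleftrightarrow> x i \<le> storey_thr alpha lam x \<and> x i < lam"
  unfolding storey_rej_def storey_thr_def by simp

lemma finite_storey_R_set [simp]: "finite (storey_R_set alpha lam x)"
  unfolding storey_R_set_def by simp

lemma storey_R_ge: "r \<in> storey_R_set alpha lam x \<Longrightarrow> r \<le> storey_R alpha lam x"
  unfolding storey_R_eq_Max by simp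

lemma storey_R_in_set:
  assumes "1 \<le> storey_R alpha lam x"
  shows "storey_R alpha lam x \<in> storey_R_set alpha lam x"
proof -
  have "storey_R alpha lam x \<in> storey_R_set alpha lam x \<union> {0}"
    unfolding storey_R_eq_Max by (intro Max_in) auto
  then show ?thesis using assms by auto
qed

lemma storey_R_le_card: "storey_R alpha lam (x::'m::finite \<Rightarrow> real) \<le> CARD('m)"
  unfolding storey_R_eq_Max by (auto simp: storey_R_set_def)

lemma storey_A_le_card: "storey_A lam (x::'m::finite \<Rightarrow> real) \<le> CARD('m)"
  unfolding storey_A_def by (simp add: card_mono)

lemma storey_A_mono: "x \<le> y \<Longrightarrow> storey_A lam x \<le> storey_A lam y"
  unfolding storey_A_def by (intro card_mono) (auto simp: le_fun_def intro: order_trans)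

lemma card_mult_storey_pi0:
  "real CARD('m) * storey_pi0 lam (x::'m::finite \<Rightarrow> real) = (1 + real (storey_A lam x)) / (1 - lam)"
  unfolding storey_pi0_def by simp

lemma storey_thr_eq:
  "storey_thr alpha lam x = alpha * (1 - lam) * real (storey_R alpha lam x) / (1 + real (storey_A lam x))"
  unfolding storey_thr_def card_mult_storey_pi0 by simp

lemma storey_R_le_card_rej:
  assumes "1 \<le> storey_R alpha lam x"
  shows "storey_R alpha lam x \<le> card (storey_rej alpha lam (x::'m::finite \<Rightarrow> real))"
proof -
  let ?R = "storey_R alpha lam x"
  have "?R \<in> storey_R_set alpha lam x"
    using storey_R_in_set assms .
  then have R: "?R \<le> CARD('m)" "order_stat x ?R \<le> storey_thr alpha lam x" "order_stat x ?R < lam"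
    by (auto simp: storey_R_set_def storey_thr_def)
  have "?R \<le> card {j. x j \<le> order_stat x ?R}"
    using order_stat_le_iff assms R(1) by blast
  also have "\<dots> \<le> card (storey_rej alpha lam x)"
    using R(2,3) by (intro card_mono) (auto simp: storey_rej_iff)
  finally show ?thesis .
qed

definition storey_thr_values :: "real \<Rightarrow> real \<Rightarrow> nat \<Rightarrow> real set" where
  "storey_thr_values alpha lam m = (\<lambda>(k, a). alpha * (1 - lam) * real k / (1 + real a)) ` ({..m} \<times> {..m})"

lemma finite_storey_thr_values [simp]: "finite (storey_thr_values alpha lam m)"
  unfolding storey_thr_values_def by simp

lemma storey_thr_in_values:
  "storey_thr alpha lam (x::'m::finite \<Rightarrow> real) \<in> storey_thr_values alpha lam CARD('m)"
  unfolding storey_thr_values_def storey_thr_eq using storey_R_le_card[of alpha lam x] storey_A_le_card[of lam x]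
  by (intro image_eqI[where x = "(storey_R alpha lam x, storey_A lam x)"]) auto

abbreviation storey_weight :: "real \<Rightarrow> ('m::finite \<Rightarrow> real) \<Rightarrow> real" where
  "storey_weight lam x \<equiv> 1 / (1 + real (storey_A lam x))"

context
  fixes alpha lam :: real
  assumes alpha_pos: "0 < alpha" and lam_less_1: "lam < 1"
begin

lemma storey_R_pos_if_rej:
  assumes "i \<in> storey_rej alpha lam x"
  shows "1 \<le> storey_R alpha lam (x::'m::finite \<Rightarrow> real)"
proof (rule ccontr)
  assume "\<not> 1 \<le> storey_R alpha lam x"
  then have "storey_thr alpha lam x = 0"
    by (simp add: storey_thr_def)
  then have xi: "x i \<le> 0" "x i < lam"
    using assms by (auto simp: storey_rej_iff)
  have "order_stat x 1 \<le> x i"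
    by (subst order_stat_le_iff) (auto simp: Suc_le_eq card_gt_0_iff)
  moreover have "0 \<le> alpha * real 1 / (real CARD('m) * storey_pi0 lam x)"
    using alpha_pos lam_less_1 by (simp add: card_mult_storey_pi0)
  ultimately have "1 \<in> storey_R_set alpha lam x"
    using xi by (auto simp: storey_R_set_def Suc_le_eq)
  then show False
    using storey_R_ge \<open>\<not> 1 \<le> storey_R alpha lam x\<close> by fastforce
qed

lemma storey_R_antimono:
  assumes "x \<le> y"
  shows "storey_R alpha lam y \<le> storey_R alpha lam (x::'m::finite \<Rightarrow> real)"
proof (cases "1 \<le> storey_R alpha lam y")
  case True
  let ?r = "storey_R alpha lam y"
  have r: "?r \<in> storey_R_set alpha lam y"
    using storey_R_in_set True .
  then have "order_stat x ?r \<le> order_stat y ?r"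
    using assms by (intro order_stat_mono) (auto simp: storey_R_set_def)
  moreover have "alpha * real ?r / (real CARD('m) * storey_pi0 lam y)
      \<le> alpha * real ?r / (real CARD('m) * storey_pi0 lam x)"
    unfolding card_mult_storey_pi0
    using storey_A_mono[OF assms, of lam] alpha_pos lam_less_1 by (intro frac_le) auto
  ultimately have "?r \<in> storey_R_set alpha lam x"
    using r by (auto simp: storey_R_set_def)
  then show ?thesis
    by (rule storey_R_ge)
qed simp

lemma storey_thr_antimono:
  assumes "x \<le> y"
  shows "storey_thr alpha lam y \<le> storey_thr alpha lam (x::'m::finite \<Rightarrow> real)"
  unfolding storey_thr_eq
  using storey_R_antimono[OF assms] storey_A_mono[OF assms, of lam] alpha_pos lam_less_1
  by (intro frac_le) auto

lemma storey_thr_ge_if_rej: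
  assumes "i \<in> storey_rej alpha lam x"
  shows "alpha * (1 - lam) / real CARD('m) \<le> storey_thr alpha lam (x::'m::finite \<Rightarrow> real)"
proof -
  have "{j. lam \<le> x j} \<subseteq> UNIV - {i}"
    using assms by (auto simp: storey_rej_iff)
  then have "storey_A lam x \<le> CARD('m) - 1"
    unfolding storey_A_def by (metis card_Diff_singleton card_mono finite iso_tuple_UNIV_I)
  moreover have "0 < CARD('m)"
    by simp
  ultimately have "Suc (storey_A lam x) \<le> CARD('m)"
    by linarith
  then have "1 + real (storey_A lam x) \<le> real CARD('m)"
    by (metis add.commute of_nat_Suc of_nat_le_iff)
  then show ?thesis
    unfolding storey_thr_eq
    using storey_R_pos_if_rej[OF assms] alpha_pos lam_less_1 by (intro frac_le) auto
qed

lemma storey_fdp_le: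
  "real (card (storey_rej alpha lam x \<inter> H0)) / real (max 1 (card (storey_rej alpha lam x)))
    \<le> alpha * (1 - lam) * (\<Sum>i\<in>H0. if i \<in> storey_rej alpha lam x
          then storey_weight lam x / storey_thr alpha lam (x::'m::finite \<Rightarrow> real) else 0)"
proof (cases "storey_rej alpha lam x = {}")
  case False
  let ?rej = "storey_rej alpha lam x" and ?R = "storey_R alpha lam x"
  have R: "1 \<le> ?R"
    using False storey_R_pos_if_rej by blast
  have "alpha * (1 - lam) * (storey_weight lam x / storey_thr alpha lam x) = 1 / real ?R"
    unfolding storey_thr_eq using alpha_pos lam_less_1 R by (simp add: field_simps)
  moreover have "(\<Sum>i\<in>H0. if i \<in> ?rej then storey_weight lam x / storey_thr alpha lam x else 0)
      = real (card (?rej \<inter> H0)) * (storey_weight lam x / storey_thr alpha lam x)"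
    by (simp add: sum.If_cases Int_commute)
  ultimately have "alpha * (1 - lam) * (\<Sum>i\<in>H0. if i \<in> ?rej then storey_weight lam x / storey_thr alpha lam x else 0)
      = real (card (?rej \<inter> H0)) / real ?R"
    by (metis mult.left_commute times_divide_eq_right mult_1_right)
  moreover have "real (card (?rej \<inter> H0)) / real (max 1 (card ?rej)) \<le> real (card (?rej \<inter> H0)) / real ?R"
    using R storey_R_le_card_rej[OF R] by (intro divide_left_mono) auto
  ultimately show ?thesis
    by simp
qed simp

lemma storey_null_term_nonneg:
  "0 \<le> (if i \<in> storey_rej alpha lam x then storey_weight lam x / storey_thr alpha lam x else 0)"
  unfolding storey_thr_eq using alpha_pos lam_less_1 by simp

lemma storey_null_term_le_sum_levels:
  fixes x :: "'m::finite \<Rightarrow> real" and pmin :: real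
  defines "V \<equiv> {v \<in> storey_thr_values alpha lam CARD('m). max (alpha * (1 - lam) / real CARD('m)) pmin \<le> v}"
  assumes "pmin \<le> x i"
  shows "(if i \<in> storey_rej alpha lam x then storey_weight lam x / storey_thr alpha lam x else 0)
    \<le> (\<Sum>v\<in>V. (if x i \<le> v \<and> storey_thr alpha lam x = v then storey_weight lam x else 0) / v)"
proof -
  have "finite V"
    unfolding V_def by simp
  have term_nonneg: "0 \<le> (if x i \<le> v \<and> storey_thr alpha lam x = v then storey_weight lam x else 0) / v"
    if "v \<in> V" for v
  proof -
    have "0 < alpha * (1 - lam) / real CARD('m)"
      using alpha_pos lam_less_1 by simp
    then show ?thesis
      using that unfolding V_def by (simp add: less_max_iff_disj)
  qed
  show ?thesis
  proof (cases "i \<in> storey_rej alpha lam x")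
    case True
    then have "x i \<le> storey_thr alpha lam x"
      by (simp add: storey_rej_iff)
    then have "storey_thr alpha lam x \<in> V"
      using storey_thr_in_values storey_thr_ge_if_rej[OF True] assms(2) unfolding V_def by simp
    have "(if i \<in> storey_rej alpha lam x then storey_weight lam x / storey_thr alpha lam x else 0)
        = (if x i \<le> storey_thr alpha lam x \<and> storey_thr alpha lam x = storey_thr alpha lam x
           then storey_weight lam x else 0) / storey_thr alpha lam x"
      using True \<open>x i \<le> storey_thr alpha lam x\<close> by simp
    also have "\<dots> \<le> (\<Sum>v\<in>V. (if x i \<le> v \<and> storey_thr alpha lam x = v then storey_weight lam x else 0) / v)"
      by (rule member_le_sum) (use term_nonneg \<open>storey_thr alpha lam x \<in> V\<close> \<open>finite V\<close> in auto)
    finally show ?thesis .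
  qed (simp add: sum_nonneg term_nonneg)
qed

end

definition recip_layer :: "nat \<Rightarrow> nat \<Rightarrow> real" where
  "recip_layer n l = (if l < n then 1 / (real l + 1) - 1 / (real l + 2) else 1 / (real n + 1))"

lemma recip_layer_nonneg: "0 \<le> recip_layer n l"
  unfolding recip_layer_def by (simp add: frac_le)

lemma recip_eq_sum_recip_layer:
  assumes "k \<le> n"
  shows "1 / (real k + 1) = (\<Sum>l\<le>n. recip_layer n l * indicator {k..} l)"
proof -
  have "(\<Sum>l\<le>n. recip_layer n l * indicator {k..} l) = sum (recip_layer n) (insert n {k..<n})"
    using assms by (intro sum.mono_neutral_cong_right) (auto simp: indicator_def)
  also have "\<dots> = 1 / (real n + 1) + (\<Sum>l = k..<n. (- 1 / (real (Suc l) + 1)) - (- 1 / (real l + 1)))"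
    by (simp add: recip_layer_def add.commute)
  also have "\<dots> = 1 / (real k + 1)"
    using assms by (subst sum_Suc_diff') auto
  finally show ?thesis ..
qed

lemma storey_weight_above_eq_sum:
  "(if u \<le> storey_thr alpha lam x then storey_weight lam x else 0)
    = (\<Sum>l\<le>CARD('m). recip_layer CARD('m) l
        * indicator {x. storey_A lam x \<le> l \<and> u \<le> storey_thr alpha lam x} (x::'m::finite \<Rightarrow> real))"
proof (cases "u \<le> storey_thr alpha lam x")
  case True
  then have "indicator {x. storey_A lam x \<le> l \<and> u \<le> storey_thr alpha lam x} x
      = (indicator {storey_A lam x..} l :: real)" for l
    by (simp add: indicator_def)
  then show ?thesis
    using True recip_eq_sum_recip_layer[OF storey_A_le_card, of lam x] by (simp add: add.commute)
qed (simp add: indicator_def)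

definition decreasing_set :: "('m \<Rightarrow> real) set \<Rightarrow> bool" where
  "decreasing_set D \<longleftrightarrow> (\<forall>x\<in>D. \<forall>y. y \<le> x \<longrightarrow> y \<in> D)"

lemma increasing_set_Compl: "decreasing_set D \<Longrightarrow> increasing_set (- D)"
  unfolding decreasing_set_def increasing_set_def le_fun_def by blast

lemma decreasing_set_storey_level_set:
  assumes "0 < alpha" "lam < 1"
  shows "decreasing_set {x::'m::finite \<Rightarrow> real. storey_A lam x \<le> l \<and> u \<le> storey_thr alpha lam x}"
  unfolding decreasing_set_def
proof (intro ballI allI impI)
  fix x y :: "'m \<Rightarrow> real"
  assume x: "x \<in> {x. storey_A lam x \<le> l \<and> u \<le> storey_thr alpha lam x}" and "y \<le> x"
  then have "storey_A lam y \<le> l"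
    using storey_A_mono[of y x lam] by simp
  moreover have "u \<le> storey_thr alpha lam y"
    using x storey_thr_antimono[OF assms \<open>y \<le> x\<close>] by simp
  ultimately show "y \<in> {x. storey_A lam x \<le> l \<and> u \<le> storey_thr alpha lam x}"
    by simp
qed

section \<open>Measurability\<close>

abbreviation vector_borel :: "('m::finite \<Rightarrow> real) measure" where
  "vector_borel \<equiv> Pi\<^sub>M UNIV (\<lambda>_. borel)"

lemma space_vector_borel: "space vector_borel = UNIV"
  by (simp add: space_PiM)

lemma measurable_card_Collect:
  assumes "\<And>i. Measurable.pred N (\<lambda>x. P x i)"
  shows "(\<lambda>x. real (card {i::'m::finite. P x i})) \<in> borel_measurable N"
proof -
  have "(\<lambda>x. real (card {i. P x i})) = (\<lambda>x. \<Sum>i\<in>UNIV. if P x i then 1 else 0)"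
    by (simp add: sum.If_cases)
  then show ?thesis
    using assms by simp
qed

lemma order_stat_measurable:
  assumes "1 \<le> r" "r \<le> CARD('m::finite)"
  shows "(\<lambda>x::'m \<Rightarrow> real. order_stat x r) \<in> borel_measurable vector_borel"
proof (rule borel_measurable_iff_le[THEN iffD2], intro allI)
  fix c
  have "{x \<in> space vector_borel. order_stat (x :: 'm \<Rightarrow> real) r \<le> c}
      = {x \<in> space vector_borel. real r \<le> real (card {i::'m. x i \<le> c})}"
    using order_stat_le_iff assms by (auto simp: space_vector_borel)
  also have "\<dots> \<in> sets vector_borel"
    using measurable_card_Collect[where P = "\<lambda>x i. x i \<le> c"] by measurable
  finally show "{x \<in> space vector_borel. order_stat (x :: 'm \<Rightarrow> real) r \<le> c} \<in> sets vector_borel" .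
qed

lemma storey_A_measurable [measurable]:
  "(\<lambda>x. real (storey_A lam x)) \<in> borel_measurable (vector_borel :: ('m::finite \<Rightarrow> real) measure)"
  unfolding storey_A_def by (rule measurable_card_Collect) measurable

lemma storey_pi0_measurable [measurable]:
  "(\<lambda>x. storey_pi0 lam x) \<in> borel_measurable (vector_borel :: ('m::finite \<Rightarrow> real) measure)"
  unfolding storey_pi0_def by measurable

lemma storey_R_set_measurable [measurable]:
  "Measurable.pred vector_borel (\<lambda>x::'m::finite \<Rightarrow> real. r \<in> storey_R_set alpha lam x)"
proof (cases "r \<in> {1..CARD('m)}")
  case True
  then have "(\<lambda>x. order_stat x r) \<in> borel_measurable (vector_borel :: ('m \<Rightarrow> real) measure)"
    by (intro order_stat_measurable) auto
  moreover have "(\<lambda>x. alpha * real r / (real CARD('m) * storey_pi0 lam x))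
      \<in> borel_measurable (vector_borel :: ('m \<Rightarrow> real) measure)"
    by measurable
  ultimately have "Measurable.pred vector_borel (\<lambda>x::'m \<Rightarrow> real.
      order_stat x r \<le> alpha * real r / (real CARD('m) * storey_pi0 lam x) \<and> order_stat x r < lam)"
    by (intro pred_intros_logic) (simp_all add: pred_def borel_measurable_le borel_measurable_less)
  moreover have "(\<lambda>x. r \<in> storey_R_set alpha lam x) = (\<lambda>x::'m \<Rightarrow> real.
      order_stat x r \<le> alpha * real r / (real CARD('m) * storey_pi0 lam x) \<and> order_stat x r < lam)"
    using True by (auto simp: storey_R_set_def)
  ultimately show ?thesis
    by simp
next
  case False
  then have "(\<lambda>x. r \<in> storey_R_set alpha lam x) = (\<lambda>x::'m \<Rightarrow> real. False)"
    by (auto simp: storey_R_set_def)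
  then show ?thesis
    by simp
qed

lemma storey_R_measurable [measurable]:
  "(\<lambda>x. real (storey_R alpha lam x)) \<in> borel_measurable (vector_borel :: ('m::finite \<Rightarrow> real) measure)"
proof -
  have Max_eq: "(\<lambda>x. real (storey_R alpha lam x))
      = (\<lambda>x::'m \<Rightarrow> real. Max ((\<lambda>r. if r \<in> storey_R_set alpha lam x then real r else 0) ` {0..CARD('m)}))"
  proof
    fix x :: "'m \<Rightarrow> real"
    have eq: "storey_R_set alpha lam x \<union> {0}
        = (\<lambda>r. if r \<in> storey_R_set alpha lam x then r else 0) ` {0..CARD('m)}"
      by (auto simp: storey_R_set_def image_iff intro: bexI[of _ 0])
    have "real (storey_R alpha lam x) = Max (real ` (storey_R_set alpha lam x \<union> {0}))"
      unfolding storey_R_eq_Max by (rule mono_Max_commute) (auto simp: mono_def)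
    then show "real (storey_R alpha lam x)
        = Max ((\<lambda>r. if r \<in> storey_R_set alpha lam x then real r else 0) ` {0..CARD('m)})"
      unfolding eq image_image by (simp add: if_distrib)
  qed
  show ?thesis
    unfolding Max_eq
    by (intro borel_measurable_Max measurable_If storey_R_set_measurable) simp_all
qed

lemma storey_thr_measurable [measurable]:
  "(\<lambda>x. storey_thr alpha lam x) \<in> borel_measurable (vector_borel :: ('m::finite \<Rightarrow> real) measure)"
  unfolding storey_thr_def by measurable

lemma storey_level_set_sets:
  "{x. storey_A lam x \<le> l \<and> u \<le> storey_thr alpha lam x} \<in> sets (vector_borel :: ('m::finite \<Rightarrow> real) measure)"
proof -
  have "{x \<in> space vector_borel. real (storey_A lam x) \<le> real l \<and> u \<le> storey_thr alpha lam x}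
      \<in> sets (vector_borel :: ('m \<Rightarrow> real) measure)"
    by measurable
  then show ?thesis
    by (simp add: space_vector_borel)
qed

section \<open>Conditional probabilities under PRDS\<close>

locale prds_coordinate = prob_space M for M :: "'a measure" +
  fixes Y :: "'a \<Rightarrow> 'm::finite \<Rightarrow> real" and I0 :: "'m set" and i :: 'm
  assumes Y_measurable [measurable]: "Y \<in> M \<rightarrow>\<^sub>M vector_borel"
    and PRDS: "PRDS M Y I0"
    and i_in_I0: "i \<in> I0"
begin

abbreviation below :: "real \<Rightarrow> 'a set" where
  "below t \<equiv> {\<omega> \<in> space M. Y \<omega> i \<le> t}"

lemma prob_below_mono: "s \<le> s' \<Longrightarrow> prob (below s) \<le> prob (below s')"
  by (intro finite_measure_mono) auto

lemma joint_event_sets: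
  assumes "S \<in> sets vector_borel" "B \<in> sets borel"
  shows "{\<omega> \<in> space M. Y \<omega> \<in> S \<and> Y \<omega> i \<in> B} \<in> sets M"
  using assms by measurable

lemma PRDS_cond_prob_bounds:
  assumes "S \<in> sets vector_borel" "increasing_set S"
  obtains g :: "real \<Rightarrow> real" where "mono g"
    and "\<And>B c. B \<in> sets borel \<Longrightarrow> (\<And>y. y \<in> B \<Longrightarrow> g y \<le> c) \<Longrightarrow>
      prob {\<omega> \<in> space M. Y \<omega> \<in> S \<and> Y \<omega> i \<in> B} \<le> c * prob {\<omega> \<in> space M. Y \<omega> i \<in> B}"
    and "\<And>B c. B \<in> sets borel \<Longrightarrow> (\<And>y. y \<in> B \<Longrightarrow> c \<le> g y) \<Longrightarrow>
      c * prob {\<omega> \<in> space M. Y \<omega> i \<in> B} \<le> prob {\<omega> \<in> space M. Y \<omega> \<in> S \<and> Y \<omega> i \<in> B}"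
proof -
  have "\<exists>g :: real \<Rightarrow> real. mono g \<and> g \<in> borel_measurable borel \<and> (\<forall>y. 0 \<le> g y \<and> g y \<le> 1) \<and>
      (\<forall>B \<in> sets borel. prob {\<omega> \<in> space M. Y \<omega> \<in> S \<and> Y \<omega> i \<in> B}
        = (\<integral>\<omega>. indicator {\<omega> \<in> space M. Y \<omega> i \<in> B} \<omega> * g (Y \<omega> i) \<partial>M))"
    using PRDS i_in_I0 assms unfolding PRDS_def by blast
  then obtain g :: "real \<Rightarrow> real" where "mono g" and [measurable]: "g \<in> borel_measurable borel"
    and g01: "\<And>y. 0 \<le> g y \<and> g y \<le> 1"
    and version: "\<And>B. B \<in> sets borel \<Longrightarrow> prob {\<omega> \<in> space M. Y \<omega> \<in> S \<and> Y \<omega> i \<in> B}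
      = (\<integral>\<omega>. indicator {\<omega> \<in> space M. Y \<omega> i \<in> B} \<omega> * g (Y \<omega> i) \<partial>M)"
    by blast
  have integrable_g: "integrable M (\<lambda>\<omega>. indicator {\<omega> \<in> space M. Y \<omega> i \<in> B} \<omega> * g (Y \<omega> i))"
    if "B \<in> sets borel" for B
    using that g01 by (intro integrable_const_bound[where B = 1]) (auto simp: indicator_def)
  have integral_const: "(\<integral>\<omega>. c * indicator {\<omega> \<in> space M. Y \<omega> i \<in> B} \<omega> \<partial>M) = c * prob {\<omega> \<in> space M. Y \<omega> i \<in> B}"
    and integrable_const: "integrable M (\<lambda>\<omega>. c * indicator {\<omega> \<in> space M. Y \<omega> i \<in> B} \<omega>)"
    if "B \<in> sets borel" for B and c :: real
    using joint_event_sets[of UNIV B] that by (auto simp: sets.Int_space_eq2 less_top[symmetric])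
  show thesis
  proof (rule that[OF \<open>mono g\<close>])
    show "prob {\<omega> \<in> space M. Y \<omega> \<in> S \<and> Y \<omega> i \<in> B} \<le> c * prob {\<omega> \<in> space M. Y \<omega> i \<in> B}"
      if "B \<in> sets borel" "\<And>y. y \<in> B \<Longrightarrow> g y \<le> c" for B c
      unfolding version[OF that(1)] integral_const[OF that(1), symmetric] using that
      by (intro integral_mono integrable_g integrable_const) (auto simp: indicator_def)
    show "c * prob {\<omega> \<in> space M. Y \<omega> i \<in> B} \<le> prob {\<omega> \<in> space M. Y \<omega> \<in> S \<and> Y \<omega> i \<in> B}"
      if "B \<in> sets borel" "\<And>y. y \<in> B \<Longrightarrow> c \<le> g y" for B c
      unfolding version[OF that(1)] integral_const[OF that(1), symmetric] using that
      by (intro integral_mono integrable_g integrable_const) (auto simp: indicator_def)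
  qed
qed

lemma cond_prob_increasing_mono:
  assumes S: "S \<in> sets vector_borel" "increasing_set S"
    and "t \<le> t'" and pos: "0 < prob (below t)"
  shows "prob {\<omega> \<in> space M. Y \<omega> \<in> S \<and> Y \<omega> i \<in> {..t}} / prob {\<omega> \<in> space M. Y \<omega> i \<in> {..t}}
    \<le> prob {\<omega> \<in> space M. Y \<omega> \<in> S \<and> Y \<omega> i \<in> {..t'}} / prob {\<omega> \<in> space M. Y \<omega> i \<in> {..t'}}"
proof -
  obtain g where "mono g"
    and le: "\<And>B c. B \<in> sets borel \<Longrightarrow> (\<And>y. y \<in> B \<Longrightarrow> g y \<le> c) \<Longrightarrow>
      prob {\<omega> \<in> space M. Y \<omega> \<in> S \<and> Y \<omega> i \<in> B} \<le> c * prob {\<omega> \<in> space M. Y \<omega> i \<in> B}"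
    and ge: "\<And>B c. B \<in> sets borel \<Longrightarrow> (\<And>y. y \<in> B \<Longrightarrow> c \<le> g y) \<Longrightarrow>
      c * prob {\<omega> \<in> space M. Y \<omega> i \<in> B} \<le> prob {\<omega> \<in> space M. Y \<omega> \<in> S \<and> Y \<omega> i \<in> B}"
    using PRDS_cond_prob_bounds[OF S] by blast
  define Q where "Q B = prob {\<omega> \<in> space M. Y \<omega> \<in> S \<and> Y \<omega> i \<in> B}" for B
  define F where "F B = prob {\<omega> \<in> space M. Y \<omega> i \<in> B}" for B
  txt \<open>As \<open>g\<close> is monotone, \<open>P(Y \<in> S | Y\<^sub>i \<le> t) \<le> g t \<le> P(Y \<in> S | t < Y\<^sub>i \<le> t')\<close>.\<close>
  have Q1: "Q {..t} \<le> g t * F {..t}"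
    unfolding Q_def F_def by (rule le) (auto intro: monoD[OF \<open>mono g\<close>])
  have Q2: "g t * F {t<..t'} \<le> Q {t<..t'}"
    unfolding Q_def F_def by (rule ge) (auto intro: monoD[OF \<open>mono g\<close>])
  have split: "{..t'} = {..t} \<union> {t<..t'}"
    using \<open>t \<le> t'\<close> by auto
  have Q_split: "Q {..t'} = Q {..t} + Q {t<..t'}"
    unfolding Q_def split using joint_event_sets[OF S(1), of "{..t}"] joint_event_sets[OF S(1), of "{t<..t'}"]
    by (subst finite_measure_Union[symmetric]) (auto intro!: arg_cong[where f = prob])
  have F_split: "F {..t'} = F {..t} + F {t<..t'}"
    unfolding F_def split using joint_event_sets[of UNIV "{..t}"] joint_event_sets[of UNIV "{t<..t'}"]
    by (subst finite_measure_Union[symmetric]) (auto intro!: arg_cong[where f = prob])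
  have "Q {..t} * F {t<..t'} \<le> g t * F {..t} * F {t<..t'}"
    using Q1 by (intro mult_right_mono) (auto simp: F_def)
  also have "\<dots> = g t * F {t<..t'} * F {..t}"
    by (simp add: mult_ac)
  also have "\<dots> \<le> Q {t<..t'} * F {..t}"
    using Q2 by (intro mult_right_mono) (auto simp: F_def)
  finally have "Q {..t} * (F {..t} + F {t<..t'}) \<le> (Q {..t} + Q {t<..t'}) * F {..t}"
    by (simp add: algebra_simps)
  moreover have "0 < F {..t}" "0 \<le> F {t<..t'}"
    using pos by (auto simp: F_def)
  ultimately show ?thesis
    using Q_split F_split unfolding Q_def[symmetric] F_def[symmetric] by (simp add: divide_simps)
qed

lemma cond_prob_decreasing_antimono:
  assumes D: "D \<in> sets vector_borel" "decreasing_set D"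
    and "t \<le> t'" and pos: "0 < prob (below t)"
  shows "prob {\<omega> \<in> below t'. Y \<omega> \<in> D} / prob (below t')
    \<le> prob {\<omega> \<in> below t. Y \<omega> \<in> D} / prob (below t)"
proof -
  have Dc: "- D \<in> sets vector_borel"
    using sets.compl_sets[OF D(1)] by (simp add: space_vector_borel Compl_eq_Diff_UNIV)
  have "0 < prob (below s)" if "t \<le> s" for s
    using pos prob_below_mono[OF that] by simp
  moreover have "prob {\<omega> \<in> below s. Y \<omega> \<in> D} / prob (below s)
      = 1 - prob {\<omega> \<in> space M. Y \<omega> \<in> - D \<and> Y \<omega> i \<in> {..s}} / prob {\<omega> \<in> space M. Y \<omega> i \<in> {..s}}"
    if "0 < prob (below s)" for s
  proof -
    have "{\<omega> \<in> below s. Y \<omega> \<in> D}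
        = {\<omega> \<in> space M. Y \<omega> i \<in> {..s}} - {\<omega> \<in> space M. Y \<omega> \<in> - D \<and> Y \<omega> i \<in> {..s}}"
      by auto
    then show ?thesis
      using joint_event_sets[OF Dc, of "{..s}"] joint_event_sets[of UNIV "{..s}"] that
      by (simp add: finite_measure_Diff subset_eq diff_divide_distrib)
  qed
  ultimately show ?thesis
    using cond_prob_increasing_mono[OF Dc increasing_set_Compl[OF D(2)] \<open>t \<le> t'\<close> pos] \<open>t \<le> t'\<close>
    by simp
qed

lemma cond_exp_decreasing_comb_antimono:
  assumes "finite L"
    and c: "\<And>l. l \<in> L \<Longrightarrow> 0 \<le> c l"
    and D: "\<And>l. l \<in> L \<Longrightarrow> D l \<in> sets vector_borel" "\<And>l. l \<in> L \<Longrightarrow> decreasing_set (D l)"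
    and f: "\<And>x. f x = (\<Sum>l\<in>L. c l * indicator (D l) x)"
    and "t \<le> t'" and pos: "0 < prob (below t)"
  shows "cond_exp_event M (\<lambda>\<omega>. f (Y \<omega>)) (below t') \<le> cond_exp_event M (\<lambda>\<omega>. f (Y \<omega>)) (below t)"
proof -
  have eq: "cond_exp_event M (\<lambda>\<omega>. f (Y \<omega>)) (below s)
      = (\<Sum>l\<in>L. c l * (prob {\<omega> \<in> below s. Y \<omega> \<in> D l} / prob (below s)))" for s
  proof -
    have sets: "{\<omega> \<in> below s. Y \<omega> \<in> D l} \<in> sets M" if "l \<in> L" for l
    proof -
      have "{\<omega> \<in> below s. Y \<omega> \<in> D l} = Y -` D l \<inter> space M \<inter> below s"
        by auto
      then show ?thesis
        using measurable_sets[OF Y_measurable D(1)[OF that]] by auto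
    qed
    have "(\<integral>\<omega>. indicator (below s) \<omega> * f (Y \<omega>) \<partial>M)
        = (\<integral>\<omega>. (\<Sum>l\<in>L. c l * indicator {\<omega> \<in> below s. Y \<omega> \<in> D l} \<omega>) \<partial>M)"
      by (rule Bochner_Integration.integral_cong) (auto simp: f indicator_def sum_distrib_left)
    also have "\<dots> = (\<Sum>l\<in>L. c l * prob {\<omega> \<in> below s. Y \<omega> \<in> D l})"
      using sets by (subst Bochner_Integration.integral_sum)
        (auto simp: less_top[symmetric] sets.Int_space_eq2 intro!: sum.cong)
    finally show ?thesis
      unfolding cond_exp_event_def by (simp add: sum_divide_distrib)
  qed
  show ?thesis
    unfolding eq using c D \<open>t \<le> t'\<close> pos
    by (intro sum_mono mult_left_mono cond_prob_decreasing_antimono) auto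
qed

end

section \<open>The bound for a single null hypothesis\<close>

text \<open>The telescoping step, with \<open>Z v = E[W; p\<^sub>i \<le> v, T = v]\<close>, \<open>G u s = E[W 1{T \<ge> u}; p\<^sub>i \<le> s]\<close>
  and \<open>F s = P(p\<^sub>i \<le> s)\<close>.\<close>

lemma sum_div_le_ratio_at_Min:
  fixes F Z :: "real \<Rightarrow> real" and G :: "real \<Rightarrow> real \<Rightarrow> real"
  assumes "finite V" "V \<noteq> {}"
    and F: "\<And>v. v \<in> V \<Longrightarrow> 0 < F v \<and> F v \<le> v"
    and Z: "\<And>v. v \<in> V \<Longrightarrow> 0 \<le> Z v \<and> Z v \<le> G v v"
    and Z_diff: "\<And>v w. v \<in> V \<Longrightarrow> w \<in> V \<Longrightarrow> v < w \<Longrightarrow> Z v \<le> G v v - G w v"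
    and G_ratio: "\<And>u s s'. u \<in> V \<Longrightarrow> s \<in> V \<Longrightarrow> s' \<in> V \<Longrightarrow> s \<le> s' \<Longrightarrow> G u s' / F s' \<le> G u s / F s"
  shows "(\<Sum>v\<in>V. Z v / v) \<le> G (Min V) (Min V) / F (Min V)"
proof -
  have "W \<subseteq> V \<Longrightarrow> W \<noteq> {} \<Longrightarrow> (\<Sum>v\<in>W. Z v / v) \<le> G (Min W) (Min W) / F (Min W)"
    if "finite W" for W
    using that
  proof (induction W rule: finite_linorder_min_induct)
    case (insert b W)
    have b: "b \<in> V" "0 < F b" "F b \<le> b" "0 \<le> Z b"
      using insert.prems F Z by auto
    have "b \<notin> W"
      using insert.hyps by auto
    have "Z b / b \<le> Z b / F b"
      using b by (intro divide_left_mono) auto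
    show ?case
    proof (cases "W = {}")
      case True
      then show ?thesis
        using \<open>Z b / b \<le> Z b / F b\<close> Z[OF b(1)] b by (simp add: divide_right_mono order_trans)
    next
      case False
      define w where "w = Min W"
      have "w \<in> W"
        unfolding w_def using False insert.hyps(1) by simp
      then have w: "w \<in> W" "b < w" "w \<in> V"
        using insert by auto
      have "(\<Sum>v\<in>insert b W. Z v / v) = Z b / b + (\<Sum>v\<in>W. Z v / v)"
        using insert.hyps \<open>b \<notin> W\<close> by simp
      also have "\<dots> \<le> Z b / F b + G w w / F w"
        using \<open>Z b / b \<le> Z b / F b\<close> insert False unfolding w_def by (intro add_mono) auto
      also have "\<dots> \<le> Z b / F b + G w b / F b"
        using G_ratio[of w b w] w b by simp
      also have "\<dots> \<le> (G b b - G w b) / F b + G w b / F b"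
        using Z_diff[of b w] w b by (simp add: divide_right_mono)
      also have "\<dots> = G b b / F b"
        by (simp add: diff_divide_distrib)
      finally show ?thesis
        using insert.hyps False by (simp add: Min_insert2 less_imp_le)
    qed
  qed simp
  then show ?thesis
    using assms(1,2) by blast
qed

context prds_coordinate
begin

lemma integrable_below_weight:
  assumes [measurable]: "Measurable.pred vector_borel P"
  shows "integrable M (\<lambda>\<omega>. indicator (below s) \<omega> * (if P (Y \<omega>) then storey_weight lam (Y \<omega>) else 0))"
proof (rule integrable_const_bound[where B = 1])
  show "AE \<omega> in M. norm (indicator (below s) \<omega> * (if P (Y \<omega>) then storey_weight lam (Y \<omega>) else 0)) \<le> 1"
    by (auto simp: indicator_def)
qed measurable

lemma storey_null_term_measurable [measurable]:
  "(\<lambda>\<omega>. if i \<in> storey_rej alpha lam (Y \<omega>) then storey_weight lam (Y \<omega>) / storey_thr alpha lam (Y \<omega>) else 0)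
    \<in> borel_measurable M"
proof -
  have "(\<lambda>\<omega>. if i \<in> storey_rej alpha lam (Y \<omega>)
        then storey_weight lam (Y \<omega>) / storey_thr alpha lam (Y \<omega>) else 0)
      = (\<lambda>\<omega>. if Y \<omega> i \<le> storey_thr alpha lam (Y \<omega>) \<and> Y \<omega> i < lam
        then storey_weight lam (Y \<omega>) / storey_thr alpha lam (Y \<omega>) else 0)"
    by (simp add: storey_rej_iff)
  also have "\<dots> \<in> borel_measurable M"
    by measurable
  finally show ?thesis .
qed

lemma prob_below_le_self:
  assumes superunif: "\<And>t. 0 \<le> t \<Longrightarrow> t \<le> 1 \<Longrightarrow> prob (below t) \<le> t"
    and "0 < prob (below v)"
  shows "prob (below v) \<le> v"
proof -
  have "0 < v"
    using assms prob_below_mono[of v 0] superunif[of 0] by force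
  then show ?thesis
    using superunif[of v] prob_le_1 by (cases "v \<le> 1") (auto intro: order_trans)
qed

lemma integral_level_le_diff:
  assumes "v < w"
  shows "(\<integral>\<omega>. indicator (below s) \<omega>
      * (if storey_thr alpha lam (Y \<omega>) = v then storey_weight lam (Y \<omega>) else 0) \<partial>M)
    \<le> (\<integral>\<omega>. indicator (below s) \<omega>
        * (if v \<le> storey_thr alpha lam (Y \<omega>) then storey_weight lam (Y \<omega>) else 0) \<partial>M)
      - (\<integral>\<omega>. indicator (below s) \<omega>
        * (if w \<le> storey_thr alpha lam (Y \<omega>) then storey_weight lam (Y \<omega>) else 0) \<partial>M)"
proof -
  have int_ge: "integrable M (\<lambda>\<omega>. indicator (below s) \<omega>
      * (if u \<le> storey_thr alpha lam (Y \<omega>) then storey_weight lam (Y \<omega>) else 0))" for u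
    by (rule integrable_below_weight) measurable
  have int_eq: "integrable M (\<lambda>\<omega>. indicator (below s) \<omega>
      * (if storey_thr alpha lam (Y \<omega>) = v then storey_weight lam (Y \<omega>) else 0))"
    by (rule integrable_below_weight) measurable
  show ?thesis
    unfolding Bochner_Integration.integral_diff[OF int_ge int_ge, symmetric] using assms
    by (intro integral_mono int_eq Bochner_Integration.integrable_diff int_ge) (auto simp: indicator_def)
qed

context
  fixes alpha lam :: real
  assumes alpha_pos: "0 < alpha" and lam_less_1: "lam < 1"
begin

lemma cond_exp_storey_weight_antimono:
  assumes "t \<le> t'" "0 < prob (below t)"
  shows "cond_exp_event M (\<lambda>\<omega>. if u \<le> storey_thr alpha lam (Y \<omega>) then storey_weight lam (Y \<omega>) else 0) (below t')
    \<le> cond_exp_event M (\<lambda>\<omega>. if u \<le> storey_thr alpha lam (Y \<omega>) then storey_weight lam (Y \<omega>) else 0) (below t)"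
  by (rule cond_exp_decreasing_comb_antimono[where L = "{..CARD('m)}" and c = "recip_layer CARD('m)"
        and D = "\<lambda>l. {x. storey_A lam x \<le> l \<and> u \<le> storey_thr alpha lam x}"
        and f = "\<lambda>x. if u \<le> storey_thr alpha lam x then storey_weight lam x else 0",
        OF _ _ _ _ storey_weight_above_eq_sum assms])
    (simp_all add: recip_layer_nonneg storey_level_set_sets decreasing_set_storey_level_set alpha_pos lam_less_1)

lemma sum_level_integrals_le_cond_exp:
  assumes "finite V" and V_ge: "\<And>v. v \<in> V \<Longrightarrow> s \<le> v" and pos: "0 < prob (below s)"
    and superunif: "\<And>t. 0 \<le> t \<Longrightarrow> t \<le> 1 \<Longrightarrow> prob (below t) \<le> t"
  shows "(\<Sum>v\<in>V. (\<integral>\<omega>. indicator (below v) \<omega>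
      * (if storey_thr alpha lam (Y \<omega>) = v then storey_weight lam (Y \<omega>) else 0) \<partial>M) / v)
    \<le> cond_exp_event M (\<lambda>\<omega>. storey_weight lam (Y \<omega>)) (below s)"
proof (cases "V = {}")
  case True
  have "0 \<le> cond_exp_event M (\<lambda>\<omega>. storey_weight lam (Y \<omega>)) (below s)"
    unfolding cond_exp_event_def by (auto intro!: divide_nonneg_nonneg integral_nonneg simp: indicator_def)
  then show ?thesis
    using True by simp
next
  case False
  define F where "F s = prob (below s)" for s
  define G where "G u s = (\<integral>\<omega>. indicator (below s) \<omega>
      * (if u \<le> storey_thr alpha lam (Y \<omega>) then storey_weight lam (Y \<omega>) else 0) \<partial>M)" for u s
  define Z where "Z v = (\<integral>\<omega>. indicator (below v) \<omega>
      * (if storey_thr alpha lam (Y \<omega>) = v then storey_weight lam (Y \<omega>) else 0) \<partial>M)" for v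
  have F_pos: "0 < F v" if "v \<in> V" for v
    using pos prob_below_mono[OF V_ge[OF that]] by (simp add: F_def)
  have cond_exp_G: "cond_exp_event M (\<lambda>\<omega>. if u \<le> storey_thr alpha lam (Y \<omega>) then storey_weight lam (Y \<omega>) else 0)
      (below s) = G u s / F s" for u s
    unfolding cond_exp_event_def G_def F_def ..
  have int_W: "integrable M (\<lambda>\<omega>. indicator (below s) \<omega> * storey_weight lam (Y \<omega>))" for s
    using integrable_below_weight[of "\<lambda>_. True" s lam] by simp
  have int_G: "integrable M (\<lambda>\<omega>. indicator (below s) \<omega>
      * (if u \<le> storey_thr alpha lam (Y \<omega>) then storey_weight lam (Y \<omega>) else 0))" for u s
    by (rule integrable_below_weight) measurable
  have int_level: "integrable M (\<lambda>\<omega>. indicator (below s) \<omega>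
      * (if storey_thr alpha lam (Y \<omega>) = v then storey_weight lam (Y \<omega>) else 0))" for v s
    by (rule integrable_below_weight) measurable
  have "(\<Sum>v\<in>V. Z v / v) \<le> G (Min V) (Min V) / F (Min V)"
  proof (rule sum_div_le_ratio_at_Min[where F = F and G = G and Z = Z, OF \<open>finite V\<close> False])
    show "0 < F v \<and> F v \<le> v" if "v \<in> V" for v
      using F_pos[OF that] prob_below_le_self[OF superunif] by (simp add: F_def)
    show "0 \<le> Z v \<and> Z v \<le> G v v" if "v \<in> V" for v
      unfolding Z_def G_def using int_level int_G
      by (auto intro!: integral_nonneg integral_mono simp: indicator_def)
    show "Z v \<le> G v v - G w v" if "v \<in> V" "w \<in> V" "v < w" for v w
      unfolding Z_def G_def using \<open>v < w\<close> by (rule integral_level_le_diff)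
    show "G u s' / F s' \<le> G u s / F s" if "u \<in> V" "s \<in> V" "s' \<in> V" "s \<le> s'" for u s s'
      using cond_exp_storey_weight_antimono[OF \<open>s \<le> s'\<close>] F_pos[OF \<open>s \<in> V\<close>]
      unfolding cond_exp_G by (simp add: F_def)
  qed
  also have "\<dots> \<le> G (Min V) s / F s"
    using cond_exp_storey_weight_antimono[of s "Min V"] V_ge pos \<open>finite V\<close> False
    unfolding cond_exp_G by (simp add: F_def)
  also have "\<dots> \<le> cond_exp_event M (\<lambda>\<omega>. storey_weight lam (Y \<omega>)) (below s)"
    unfolding cond_exp_event_def G_def F_def using pos
    by (intro divide_right_mono integral_mono int_G int_W) (auto simp: indicator_def)
  finally show ?thesis
    unfolding Z_def .
qed

lemma storey_null_term_integral_le: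
  fixes pmin :: real
  defines "pstar \<equiv> max (alpha * (1 - lam) / real CARD('m)) pmin"
    and "X \<equiv> \<lambda>\<omega>. if i \<in> storey_rej alpha lam (Y \<omega>)
      then storey_weight lam (Y \<omega>) / storey_thr alpha lam (Y \<omega>) else 0"
  assumes superunif: "\<And>t. 0 \<le> t \<Longrightarrow> t \<le> 1 \<Longrightarrow> prob (below t) \<le> t"
    and pmin: "AE \<omega> in M. pmin \<le> Y \<omega> i"
    and pos: "0 < prob (below pstar)"
  shows "integrable M X"
    and "(\<integral>\<omega>. X \<omega> \<partial>M) \<le> cond_exp_event M (\<lambda>\<omega>. storey_weight lam (Y \<omega>)) (below pstar)"
proof -
  define V where "V = {v \<in> storey_thr_values alpha lam CARD('m). pstar \<le> v}"
  define level where "level v \<omega> = indicator (below v) \<omega>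
      * (if storey_thr alpha lam (Y \<omega>) = v then storey_weight lam (Y \<omega>) else 0)" for v \<omega>
  define B where "B \<omega> = (\<Sum>v\<in>V. level v \<omega> / v)" for \<omega>
  have B_eq: "B \<omega> = (\<Sum>v\<in>V. (if Y \<omega> i \<le> v \<and> storey_thr alpha lam (Y \<omega>) = v
      then storey_weight lam (Y \<omega>) else 0) / v)" if "\<omega> \<in> space M" for \<omega>
    unfolding B_def level_def using that by (intro sum.cong) (auto simp: indicator_def)
  have X_le_B: "AE \<omega> in M. X \<omega> \<le> B \<omega>"
    using pmin AE_space
  proof eventually_elim
    case (elim \<omega>)
    show ?case
      unfolding X_def B_eq[OF elim(2)] V_def pstar_def
      by (rule storey_null_term_le_sum_levels[where x = "Y \<omega>", OF alpha_pos lam_less_1 elim(1)])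
  qed
  have integrable_level: "integrable M (level v)" for v
    unfolding level_def by (rule integrable_below_weight) measurable
  then have integrable_B: "integrable M B"
    unfolding B_def by (intro Bochner_Integration.integrable_sum Bochner_Integration.integrable_divide)
  have X_nonneg: "0 \<le> X \<omega>" for \<omega>
    unfolding X_def by (rule storey_null_term_nonneg[OF alpha_pos lam_less_1])
  have "X \<in> borel_measurable M"
    unfolding X_def by measurable
  moreover have "AE \<omega> in M. norm (X \<omega>) \<le> norm (B \<omega>)"
    using X_le_B X_nonneg by (auto elim: AE_mp)
  ultimately show integrable_X: "integrable M X"
    by (rule Bochner_Integration.integrable_bound[OF integrable_B])
  have "(\<integral>\<omega>. X \<omega> \<partial>M) \<le> (\<integral>\<omega>. B \<omega> \<partial>M)"
    by (rule integral_mono_AE[OF integrable_X integrable_B X_le_B])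
  also have "\<dots> = (\<Sum>v\<in>V. (\<integral>\<omega>. level v \<omega> \<partial>M) / v)"
    unfolding B_def using integrable_level by (simp add: Bochner_Integration.integral_sum)
  also have "\<dots> \<le> cond_exp_event M (\<lambda>\<omega>. storey_weight lam (Y \<omega>)) (below pstar)"
    unfolding level_def using pos superunif
    by (intro sum_level_integrals_le_cond_exp) (auto simp: V_def)
  finally show "(\<integral>\<omega>. X \<omega> \<partial>M) \<le> cond_exp_event M (\<lambda>\<omega>. storey_weight lam (Y \<omega>)) (below pstar)" .
qed

end

end

lemma (in prob_space) integral_storey_fdp_le:
  fixes Y :: "'a \<Rightarrow> 'm::finite \<Rightarrow> real"
  assumes "0 < alpha" "lam < 1"
    and integrable: "\<And>i. i \<in> H0 \<Longrightarrow> integrable M (\<lambda>\<omega>. if i \<in> storey_rej alpha lam (Y \<omega>)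
      then storey_weight lam (Y \<omega>) / storey_thr alpha lam (Y \<omega>) else 0)"
  shows "(\<integral>\<omega>. real (card (storey_rej alpha lam (Y \<omega>) \<inter> H0))
      / real (max 1 (card (storey_rej alpha lam (Y \<omega>)))) \<partial>M)
    \<le> alpha * (1 - lam) * (\<Sum>i\<in>H0. (\<integral>\<omega>. (if i \<in> storey_rej alpha lam (Y \<omega>)
      then storey_weight lam (Y \<omega>) / storey_thr alpha lam (Y \<omega>) else 0) \<partial>M))"
proof -
  have "(\<integral>\<omega>. real (card (storey_rej alpha lam (Y \<omega>) \<inter> H0))
      / real (max 1 (card (storey_rej alpha lam (Y \<omega>)))) \<partial>M)
    \<le> (\<integral>\<omega>. alpha * (1 - lam) * (\<Sum>i\<in>H0. if i \<in> storey_rej alpha lam (Y \<omega>)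
      then storey_weight lam (Y \<omega>) / storey_thr alpha lam (Y \<omega>) else 0) \<partial>M)"
  proof (rule integral_mono_AE')
    show "integrable M (\<lambda>\<omega>. alpha * (1 - lam) * (\<Sum>i\<in>H0. if i \<in> storey_rej alpha lam (Y \<omega>)
      then storey_weight lam (Y \<omega>) / storey_thr alpha lam (Y \<omega>) else 0))"
      by (intro Bochner_Integration.integrable_mult_right Bochner_Integration.integrable_sum integrable)
    show "AE \<omega> in M. real (card (storey_rej alpha lam (Y \<omega>) \<inter> H0))
        / real (max 1 (card (storey_rej alpha lam (Y \<omega>))))
      \<le> alpha * (1 - lam) * (\<Sum>i\<in>H0. if i \<in> storey_rej alpha lam (Y \<omega>)
        then storey_weight lam (Y \<omega>) / storey_thr alpha lam (Y \<omega>) else 0)"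
      by (intro AE_I2 storey_fdp_le assms(1,2))
    show "AE \<omega> in M. 0 \<le> alpha * (1 - lam) * (\<Sum>i\<in>H0. if i \<in> storey_rej alpha lam (Y \<omega>)
        then storey_weight lam (Y \<omega>) / storey_thr alpha lam (Y \<omega>) else 0)"
      using assms(1,2) by (intro AE_I2 mult_nonneg_nonneg sum_nonneg storey_null_term_nonneg) auto
  qed
  also have "\<dots> = alpha * (1 - lam) * (\<Sum>i\<in>H0. (\<integral>\<omega>. (if i \<in> storey_rej alpha lam (Y \<omega>)
      then storey_weight lam (Y \<omega>) / storey_thr alpha lam (Y \<omega>) else 0) \<partial>M))"
    using integrable by (simp add: Bochner_Integration.integral_sum)
  finally show ?thesis .
qed

theorem theorem7:
  fixes M :: "'a measure" and p :: "'m::finite \<Rightarrow> 'a \<Rightarrow> real" and H0 :: "'m set"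
    and alpha lam pmin :: real
  assumes "prob_space M"
    and meas: "\<And>i. p i \<in> borel_measurable M"
    and pval: "\<And>i \<omega>. \<omega> \<in> space M \<Longrightarrow> 0 \<le> p i \<omega> \<and> p i \<omega> \<le> 1"
    and prds: "PRDS M (\<lambda>\<omega> i. p i \<omega>) H0"
    and superunif: "\<And>i t. i \<in> H0 \<Longrightarrow> 0 \<le> t \<Longrightarrow> t \<le> 1 \<Longrightarrow>
                       measure M {\<omega> \<in> space M. p i \<omega> \<le> t} \<le> t"
    and pmin_ae: "\<And>i. i \<in> H0 \<Longrightarrow> AE \<omega> in M. pmin \<le> p i \<omega>"
    and "0 \<le> pmin" "pmin \<le> 1"
    and "0 < alpha" "alpha < 1" "0 < lam" "lam < 1"
    and cond_def: "\<And>i. i \<in> H0 \<Longrightarrow>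
       measure M {\<omega> \<in> space M. p i \<omega> \<le> max (alpha * (1 - lam) / real CARD('m)) pmin} > 0"
  shows "(\<integral>\<omega>. real (card (storey_rej alpha lam (\<lambda>i. p i \<omega>) \<inter> H0))
               / real (max 1 (card (storey_rej alpha lam (\<lambda>i. p i \<omega>)))) \<partial>M)
         \<le> alpha * (1 - lam) *
           (\<Sum>i\<in>H0. cond_exp_event M (\<lambda>\<omega>. 1 / (1 + real (storey_A lam (\<lambda>j. p j \<omega>))))
               {\<omega> \<in> space M. p i \<omega> \<le> max (alpha * (1 - lam) / real CARD('m)) pmin})"
proof -
  interpret prob_space M by fact
  have null_term: "integrable M (\<lambda>\<omega>. if i \<in> storey_rej alpha lam (\<lambda>j. p j \<omega>)
        then storey_weight lam (\<lambda>j. p j \<omega>) / storey_thr alpha lam (\<lambda>j. p j \<omega>) else 0)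
      \<and> (\<integral>\<omega>. (if i \<in> storey_rej alpha lam (\<lambda>j. p j \<omega>)
        then storey_weight lam (\<lambda>j. p j \<omega>) / storey_thr alpha lam (\<lambda>j. p j \<omega>) else 0) \<partial>M)
      \<le> cond_exp_event M (\<lambda>\<omega>. storey_weight lam (\<lambda>j. p j \<omega>))
          {\<omega> \<in> space M. p i \<omega> \<le> max (alpha * (1 - lam) / real CARD('m)) pmin}"
    if "i \<in> H0" for i
  proof -
    interpret prds_coordinate M "\<lambda>\<omega> j. p j \<omega>" H0 i
      using prds that by unfold_locales (auto intro: measurable_PiM_single' meas)
    show ?thesis
      using storey_null_term_integral_le[OF \<open>0 < alpha\<close> \<open>lam < 1\<close> superunif[OF that] pmin_ae[OF that] cond_def[OF that]]
      by simp
  qed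
  have "(\<integral>\<omega>. real (card (storey_rej alpha lam (\<lambda>i. p i \<omega>) \<inter> H0))
      / real (max 1 (card (storey_rej alpha lam (\<lambda>i. p i \<omega>)))) \<partial>M)
    \<le> alpha * (1 - lam) * (\<Sum>i\<in>H0. (\<integral>\<omega>. (if i \<in> storey_rej alpha lam (\<lambda>j. p j \<omega>)
      then storey_weight lam (\<lambda>j. p j \<omega>) / storey_thr alpha lam (\<lambda>j. p j \<omega>) else 0) \<partial>M))"
    using null_term by (intro integral_storey_fdp_le[where Y = "\<lambda>\<omega> j. p j \<omega>"] \<open>0 < alpha\<close> \<open>lam < 1\<close>) auto
  also have "\<dots> \<le> alpha * (1 - lam) * (\<Sum>i\<in>H0. cond_exp_event M (\<lambda>\<omega>. storey_weight lam (\<lambda>j. p j \<omega>))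
      {\<omega> \<in> space M. p i \<omega> \<le> max (alpha * (1 - lam) / real CARD('m)) pmin})"
    using null_term \<open>0 < alpha\<close> \<open>lam < 1\<close> by (intro mult_left_mono sum_mono) auto
  finally show ?thesis .
qed

end
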